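(* Let $G$ be a finite group with $|G|\ge3$. Then $\mathsf D(G)\le\omega(G)$, and equality holds if $G$ is abelian.
   Context: For a finite group $G$ (multiplicative, identity $1_G$), $\mathcal F(G)$ is the free abelian monoid with basis $G$ (sequences $S=g_1\boldsymbol{\cdot}\ldots\boldsymbol{\cdot}g_\ell$, operation $\boldsymbol{\cdot}$, length $|S|=\ell$). $\pi(S)=\{g_{\tau(1)}\cdots g_{\tau(\ell)}:\tau\text{ a permutation of }[1,\ell]\}$, $\mathcal B(G)=\{S\in\mathcal F(G):1_G\in\pi(S)\}$, $\mathcal A(G)$ its set of atoms, and $\mathsf D(G)=\max\{|U|:U\in\mathcal A(G)\}$. For an atomic monoid $H$ and $b\in H$, $\omega(H,b)$ is the smallest $N\in\mathbb N_0\cup\{\infty\}$ such that for all $n\in\mathbb N$ and $a_1,\dots,a_n\in H$ with $b\mid a_1\cdots a_n$ (in $H$), there is $\Omega\subset[1,n]$ with $|\Omega|\le N$ and $b\mid\prod_{\nu\in\Omega}a_\nu$ (in $H$). $\omega(H)=\sup\{\omega(H,u):u\in\mathcal A(H)\}$, and $\omega(G)=\omega(\mathcal B(G))$. *)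

theory Defs
  imports "HOL-Algebra.Group" "HOL-Library.Multiset" "HOL-Library.Extended_Nat"
begin

text \<open>Sequences over G are finite multisets of elements of the carrier.
  The product of a list of group elements, in the given order.\<close>

definition list_prod :: "('a, 'b) monoid_scheme \<Rightarrow> 'a list \<Rightarrow> 'a" where
  "list_prod G xs = foldr (\<lambda>x y. x \<otimes>\<^bsub>G\<^esub> y) xs \<one>\<^bsub>G\<^esub>"

definition seq_prods :: "('a, 'b) monoid_scheme \<Rightarrow> 'a multiset \<Rightarrow> 'a set" where
  "seq_prods G S = {list_prod G xs | xs. mset xs = S}"

text \<open>The monoid of product-one sequences B(G) (as a set of sequences; operation is +).\<close>
definition zss :: "('a, 'b) monoid_scheme \<Rightarrow> 'a multiset set" where
  "zss G = {S. set_mset S \<subseteq> carrier G \<and> \<one>\<^bsub>G\<^esub> \<in> seq_prods G S}"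

definition zss_dvd :: "('a, 'b) monoid_scheme \<Rightarrow> 'a multiset \<Rightarrow> 'a multiset \<Rightarrow> bool" where
  "zss_dvd G b a \<longleftrightarrow> (\<exists>c \<in> zss G. a = b + c)"

text \<open>Atoms of B(G): non-units (the only unit is the empty sequence) that are not
  a product of two non-units.\<close>
definition zss_atoms :: "('a, 'b) monoid_scheme \<Rightarrow> 'a multiset set" where
  "zss_atoms G = {U \<in> zss G. U \<noteq> {#} \<and>
      (\<forall>A \<in> zss G. \<forall>B \<in> zss G. U = A + B \<longrightarrow> A = {#} \<or> B = {#})}"

definition davenport :: "('a, 'b) monoid_scheme \<Rightarrow> nat" where
  "davenport G = Max (size ` zss_atoms G)"

definition omega_elem :: "('a, 'b) monoid_scheme \<Rightarrow> 'a multiset \<Rightarrow> enat" where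
  "omega_elem G b = Inf {N :: enat. \<forall>n :: nat. n \<ge> 1 \<longrightarrow>
      (\<forall>a :: nat \<Rightarrow> 'a multiset. (\<forall>i \<in> {1..n}. a i \<in> zss G) \<longrightarrow>
         zss_dvd G b (\<Sum>i\<in>{1..n}. a i) \<longrightarrow>
         (\<exists>\<Omega> \<subseteq> {1..n}. enat (card \<Omega>) \<le> N \<and> zss_dvd G b (\<Sum>i\<in>\<Omega>. a i)))}"

definition omega_grp :: "('a, 'b) monoid_scheme \<Rightarrow> enat" where
  "omega_grp G = Sup (omega_elem G ` zss_atoms G)"

end

theory Submission
  imports Defs
begin

text \<open>Take an atom \<open>U\<close> of maximal length \<open>D(G) \<ge> 3\<close> and write \<open>U\<cdot>U\<^sup>-\<^sup>1\<close> as the product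
  of the \<open>|U|\<close> atoms \<open>g\<cdot>g\<^sup>-\<^sup>1\<close>. A subproduct divisible by \<open>U\<^sup>-\<^sup>1\<close> must use all of them:
  omitting one factor \<open>g\<cdot>g\<^sup>-\<^sup>1\<close> would exhibit it as a divisor of the atom \<open>U\<close>, forcing
  \<open>|U| = 2\<close>. Hence \<open>\<omega>(U\<^sup>-\<^sup>1) \<ge> D(G)\<close>. If \<open>G\<close> is abelian, the complement of a
  product-one subsequence of a product-one sequence is again product-one, so any \<open>V\<close> dividing
  a product is already divided by the at most \<open>|V|\<close> factors containing its terms, and
  \<open>\<omega>(V) \<le> |V| \<le> D(G)\<close>.\<close>

lemma list_prod_Nil [simp]: "list_prod G [] = \<one>\<^bsub>G\<^esub>"
  by (simp add: list_prod_def)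

lemma list_prod_Cons [simp]: "list_prod G (x # xs) = x \<otimes>\<^bsub>G\<^esub> list_prod G xs"
  by (simp add: list_prod_def)

context monoid
begin

lemma list_prod_closed [simp]: "set xs \<subseteq> carrier G \<Longrightarrow> list_prod G xs \<in> carrier G"
  by (induction xs) auto

lemma list_prod_append:
  "set xs \<subseteq> carrier G \<Longrightarrow> set ys \<subseteq> carrier G \<Longrightarrow>
   list_prod G (xs @ ys) = list_prod G xs \<otimes> list_prod G ys"
  by (induction xs) (auto simp: m_assoc)

end

lemma (in group) list_prod_rev_map_inv:
  "set xs \<subseteq> carrier G \<Longrightarrow> list_prod G (rev (map (m_inv G) xs)) = inv (list_prod G xs)"
  by (induction xs) (simp_all add: list_prod_append inv_mult_group subset_eq)

lemma (in comm_monoid) list_prod_mset_eq: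
  "set xs \<subseteq> carrier G \<Longrightarrow> mset xs = mset ys \<Longrightarrow> list_prod G xs = list_prod G ys"
proof (induction xs arbitrary: ys)
  case (Cons x xs)
  then have "x \<in> set ys" by (metis list.set_intros(1) set_mset_mset)
  then obtain ys1 ys2 where ys: "ys = ys1 @ x # ys2" by (meson split_list)
  have "set ys \<subseteq> carrier G" using Cons.prems by (metis set_mset_mset)
  then have "list_prod G ys = x \<otimes> list_prod G (ys1 @ ys2)"
    using ys by (simp add: list_prod_append m_lcomm)
  also have "list_prod G (ys1 @ ys2) = list_prod G xs"
    using Cons.IH[of "ys1 @ ys2"] Cons.prems ys by simp
  finally show ?case by simp
qed simp

lemma zss_iff:
  "S \<in> zss G \<longleftrightarrow> (\<exists>xs. mset xs = S \<and> set xs \<subseteq> carrier G \<and> list_prod G xs = \<one>\<^bsub>G\<^esub>)"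
  by (auto simp: zss_def seq_prods_def) metis

lemma mset_in_zssI: "set xs \<subseteq> carrier G \<Longrightarrow> list_prod G xs = \<one>\<^bsub>G\<^esub> \<Longrightarrow> mset xs \<in> zss G"
  by (auto simp: zss_iff)

lemma zss_carrier: "S \<in> zss G \<Longrightarrow> set_mset S \<subseteq> carrier G"
  by (simp add: zss_def)

lemma zss_empty [simp]: "{#} \<in> zss G"
  by (auto simp: zss_iff)

context monoid
begin

lemma zss_add:
  assumes "A \<in> zss G" "B \<in> zss G" shows "A + B \<in> zss G"
proof -
  obtain xs ys where "mset xs = A" "set xs \<subseteq> carrier G" "list_prod G xs = \<one>"
    and "mset ys = B" "set ys \<subseteq> carrier G" "list_prod G ys = \<one>"
    using assms by (auto simp: zss_iff)
  then show ?thesis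
    unfolding zss_iff by (intro exI[of _ "xs @ ys"]) (simp add: list_prod_append)
qed

lemma zss_sum: "(\<And>i. i \<in> I \<Longrightarrow> a i \<in> zss G) \<Longrightarrow> (\<Sum>i\<in>I. a i) \<in> zss G"
  by (induction I rule: infinite_finite_induct) (auto intro: zss_add)

lemma zss_singleton_iff [simp]: "{#x#} \<in> zss G \<longleftrightarrow> x = \<one>"
  by (auto simp: zss_iff intro: exI[of _ "[\<one>]"])

lemma zss_atomsI_size_le_3:
  assumes S: "S \<in> zss G" "S \<noteq> {#}" "\<one> \<notin># S" and "size S \<le> 3"
  shows "S \<in> zss_atoms G"
proof -
  have False if AB: "A \<in> zss G" "B \<in> zss G" "S = A + B" "A \<noteq> {#}" "B \<noteq> {#}" for A B
  proof -
    have "size A + size B \<le> 3" "size A \<noteq> 0" "size B \<noteq> 0"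
      using AB \<open>size S \<le> 3\<close> by auto
    then have "size A = 1 \<or> size B = 1"
      by linarith
    then obtain w where "{#w#} \<in> zss G" "w \<in># S"
      using AB by (metis size_1_singleton_mset union_iff union_single_eq_member)
    with S show False
      by simp
  qed
  with S show ?thesis
    unfolding zss_atoms_def by blast
qed

end

context group
begin

lemma zss_image_inv:
  assumes "S \<in> zss G" shows "image_mset (m_inv G) S \<in> zss G"
proof -
  obtain xs where xs: "mset xs = S" "set xs \<subseteq> carrier G" "list_prod G xs = \<one>"
    using assms by (auto simp: zss_iff)
  then have "list_prod G (rev (map (m_inv G) xs)) = \<one>"
    by (simp add: list_prod_rev_map_inv)
  with xs show ?thesis
    unfolding zss_iff by (intro exI[of _ "rev (map (m_inv G) xs)"]) auto
qed

lemma image_mset_inv_inv: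
  "set_mset S \<subseteq> carrier G \<Longrightarrow> image_mset (m_inv G) (image_mset (m_inv G) S) = S"
  by (induction S) (auto simp: inv_inv)

lemma zss_atoms_image_inv:
  assumes U: "U \<in> zss_atoms G" shows "image_mset (m_inv G) U \<in> zss_atoms G"
proof -
  have "A = {#} \<or> B = {#}"
    if "A \<in> zss G" "B \<in> zss G" "image_mset (m_inv G) U = A + B" for A B
  proof -
    have "U = image_mset (m_inv G) (image_mset (m_inv G) U)"
      using U by (simp add: image_mset_inv_inv zss_atoms_def zss_carrier)
    then have "U = image_mset (m_inv G) A + image_mset (m_inv G) B"
      using that(3) by simp
    moreover have "image_mset (m_inv G) A \<in> zss G" "image_mset (m_inv G) B \<in> zss G"
      using that(1,2) by (auto intro: zss_image_inv)
    ultimately have "image_mset (m_inv G) A = {#} \<or> image_mset (m_inv G) B = {#}"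
      using U unfolding zss_atoms_def by blast
    then show ?thesis
      by simp
  qed
  with U show ?thesis
    unfolding zss_atoms_def by (auto intro: zss_image_inv)
qed

lemma ex_nontrivial_pair_with_nontrivial_product:
  assumes "card (carrier G) \<ge> 3"
  shows "\<exists>x\<in>carrier G. \<exists>y\<in>carrier G. x \<noteq> \<one> \<and> y \<noteq> \<one> \<and> x \<otimes> y \<noteq> \<one>"
proof -
  have avoid: "\<exists>y\<in>carrier G. y \<noteq> \<one> \<and> y \<noteq> z" for z
  proof (rule ccontr)
    assume "\<not> ?thesis"
    then have "card (carrier G) \<le> card {\<one>, z}"
      by (intro card_mono) auto
    also have "\<dots> \<le> 2"
      by (simp add: card_insert_if)
    finally show False
      using assms by simp
  qed
  then obtain x where x: "x \<in> carrier G" "x \<noteq> \<one>"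
    by blast
  show ?thesis
  proof (cases "x \<otimes> x = \<one>")
    case True
    obtain y where y: "y \<in> carrier G" "y \<noteq> \<one>" "y \<noteq> x"
      using avoid by blast
    then have "x \<otimes> y \<noteq> x \<otimes> x"
      using x by simp
    then have "x \<otimes> y \<noteq> \<one>"
      using True by simp
    with x y show ?thesis
      by blast
  qed (use x in blast)
qed

lemma ex_zss_atom_size_3:
  assumes "card (carrier G) \<ge> 3"
  shows "\<exists>U\<in>zss_atoms G. size U = 3"
proof -
  obtain x y where xy: "x \<in> carrier G" "y \<in> carrier G" "x \<noteq> \<one>" "y \<noteq> \<one>" "x \<otimes> y \<noteq> \<one>"
    using ex_nontrivial_pair_with_nontrivial_product[OF assms] by blast
  define U where "U = mset [x, y, inv (x \<otimes> y)]"
  have "U \<in> zss G"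
    unfolding U_def zss_iff using xy
    by (intro exI[of _ "[x, y, inv (x \<otimes> y)]"]) (simp add: m_assoc[symmetric])
  moreover have "\<one> \<notin># U"
    using xy by (simp add: U_def eq_commute[of "\<one>"])
  ultimately have "U \<in> zss_atoms G"
    by (intro zss_atomsI_size_le_3) (auto simp: U_def)
  then show ?thesis
    by (force simp: U_def)
qed

lemma list_prod_take_decompose:
  assumes "i \<le> j" "set xs \<subseteq> carrier G"
  shows "list_prod G (take j xs) = list_prod G (take i xs) \<otimes> list_prod G (drop i (take j xs))"
proof -
  have "take j xs = take i xs @ drop i (take j xs)"
    using assms(1) by (metis append_take_drop_id min.absorb1 take_take)
  then show ?thesis
    using assms(2) by (metis list_prod_append set_drop_subset set_take_subset subset_trans)
qed

lemma list_prod_infix_eq_one: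
  assumes "i \<le> j" "set xs \<subseteq> carrier G" "list_prod G (take i xs) = list_prod G (take j xs)"
  shows "list_prod G (drop i (take j xs)) = \<one>"
  using list_prod_take_decompose[OF assms(1,2)] assms(2,3)
  by (metis l_cancel_one' list_prod_closed set_drop_subset set_take_subset subset_trans)

lemma list_prod_remove_infix:
  assumes "i \<le> j" "set xs \<subseteq> carrier G" "list_prod G (take i xs) = list_prod G (take j xs)"
  shows "list_prod G (take i xs @ drop j xs) = list_prod G xs"
proof -
  have "list_prod G xs = list_prod G (take j xs) \<otimes> list_prod G (drop j xs)"
    using assms(2) by (metis append_take_drop_id list_prod_append set_drop_subset set_take_subset subset_trans)
  with assms show ?thesis
    by (metis list_prod_append set_drop_subset set_take_subset subset_trans)
qed

text \<open>Pigeonhole on prefix products: two equal ones cut an overlong product-one sequence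
  into two nonempty product-one pieces.\<close>

lemma size_zss_atom_le_card:
  assumes "finite (carrier G)" and U: "U \<in> zss_atoms G"
  shows "size U \<le> card (carrier G)"
proof (rule ccontr)
  assume too_long: "\<not> ?thesis"
  obtain xs where xs: "mset xs = U" "set xs \<subseteq> carrier G" "list_prod G xs = \<one>"
    using U by (auto simp: zss_atoms_def zss_iff)
  define n where "n = length xs"
  have "card (carrier G) < n"
    using too_long xs(1) by (auto simp: n_def)
  define f where "f k = list_prod G (take k xs)" for k
  have f_closed: "f k \<in> carrier G" for k
    unfolding f_def using xs(2) by (meson list_prod_closed set_take_subset subset_trans)
  have "\<not> inj_on f {..<n}"
  proof
    assume "inj_on f {..<n}"
    then have "card {..<n} \<le> card (carrier G)"
      using f_closed assms(1) by (intro card_inj_on_le) auto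
    with \<open>card (carrier G) < n\<close> show False
      by simp
  qed
  then obtain i j where ij: "i < j" "j < n" "f i = f j"
    unfolding inj_on_def by (metis lessThan_iff linorder_neqE_nat)
  define T where "T = drop i (take j xs)"
  define R where "R = take i xs @ drop j xs"
  have carrier: "set T \<subseteq> carrier G" "set R \<subseteq> carrier G"
    using xs(2) unfolding T_def R_def by (auto dest: in_set_takeD in_set_dropD)
  have "mset T \<in> zss G"
    by (rule mset_in_zssI[OF carrier(1)])
      (use list_prod_infix_eq_one[of i j xs] ij xs in \<open>simp add: T_def f_def\<close>)
  moreover have "mset R \<in> zss G"
    by (rule mset_in_zssI[OF carrier(2)])
      (use list_prod_remove_infix[of i j xs] ij xs in \<open>simp add: R_def f_def\<close>)
  moreover have "U = mset T + mset R"
  proof -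
    have "xs = take i xs @ T @ drop j xs"
      using ij(1) unfolding T_def by (metis append.assoc append_take_drop_id less_imp_le min.absorb1 take_take)
    then show ?thesis
      using xs(1) unfolding R_def by (metis mset_append union_commute union_lcomm)
  qed
  moreover have "mset T \<noteq> {#}" "mset R \<noteq> {#}"
    using ij by (auto simp: T_def R_def n_def)
  ultimately show False
    using U unfolding zss_atoms_def by blast
qed

lemma finite_size_zss_atoms:
  "finite (carrier G) \<Longrightarrow> finite (size ` zss_atoms G)"
  by (rule finite_subset[of _ "{..card (carrier G)}"]) (auto simp: size_zss_atom_le_card)

lemma size_zss_atom_le_davenport:
  "finite (carrier G) \<Longrightarrow> U \<in> zss_atoms G \<Longrightarrow> size U \<le> davenport G"
  unfolding davenport_def by (simp add: finite_size_zss_atoms)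

lemma ex_zss_atom_size_davenport:
  assumes "finite (carrier G)" "zss_atoms G \<noteq> {}"
  shows "\<exists>U\<in>zss_atoms G. size U = davenport G"
  using Max_in[OF finite_size_zss_atoms[OF assms(1)]] assms(2) unfolding davenport_def by auto

end

lemma omega_elem_geI:
  fixes n :: nat
  assumes "n \<ge> 1" "\<And>i. i \<in> {1..n} \<Longrightarrow> a i \<in> zss G" "zss_dvd G b (\<Sum>i\<in>{1..n}. a i)"
    and "\<And>\<Omega>. \<Omega> \<subseteq> {1..n} \<Longrightarrow> zss_dvd G b (\<Sum>i\<in>\<Omega>. a i) \<Longrightarrow> N \<le> card \<Omega>"
  shows "enat N \<le> omega_elem G b"
  unfolding omega_elem_def
proof (rule Inf_greatest)
  fix M
  assume "M \<in> {M. \<forall>n::nat. n \<ge> 1 \<longrightarrow> (\<forall>a. (\<forall>i\<in>{1..n}. a i \<in> zss G) \<longrightarrow> zss_dvd G b (\<Sum>i\<in>{1..n}. a i) \<longrightarrow>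
      (\<exists>\<Omega>\<subseteq>{1..n}. enat (card \<Omega>) \<le> M \<and> zss_dvd G b (\<Sum>i\<in>\<Omega>. a i)))}"
  from this[unfolded mem_Collect_eq, rule_format, where n = n and a = a] assms(1-3)
  obtain \<Omega> where "\<Omega> \<subseteq> {1..n}" "enat (card \<Omega>) \<le> M" "zss_dvd G b (\<Sum>i\<in>\<Omega>. a i)"
    by blast
  with assms(4) show "enat N \<le> M"
    by (meson enat_ord_simps(1) order_trans)
qed

lemma omega_elem_leI:
  assumes "\<And>(n :: nat) a. n \<ge> 1 \<Longrightarrow> (\<And>i. i \<in> {1..n} \<Longrightarrow> a i \<in> zss G) \<Longrightarrow> zss_dvd G b (\<Sum>i\<in>{1..n}. a i) \<Longrightarrow>
      \<exists>\<Omega>\<subseteq>{1..n}. card \<Omega> \<le> N \<and> zss_dvd G b (\<Sum>i\<in>\<Omega>. a i)"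
  shows "omega_elem G b \<le> enat N"
  unfolding omega_elem_def
proof (rule Inf_lower, intro CollectI allI impI)
  fix n :: nat and a
  assume "n \<ge> 1" "\<forall>i\<in>{1..n}. a i \<in> zss G" "zss_dvd G b (\<Sum>i\<in>{1..n}. a i)"
  then obtain \<Omega> where "\<Omega> \<subseteq> {1..n}" "card \<Omega> \<le> N" "zss_dvd G b (\<Sum>i\<in>\<Omega>. a i)"
    using assms[where n = n and a = a] by blast
  then show "\<exists>\<Omega>\<subseteq>{1..n}. enat (card \<Omega>) \<le> enat N \<and> zss_dvd G b (\<Sum>i\<in>\<Omega>. a i)"
    by auto
qed

lemma (in monoid) zss_atom_eq_omitted_summand:
  assumes U: "U \<in> zss_atoms G" and "finite I" "\<And>i. i \<in> I \<Longrightarrow> a i \<in> zss G"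
    and sum: "(\<Sum>i\<in>I. a i) = U + b" and "\<Omega> \<subseteq> I" "zss_dvd G b (\<Sum>i\<in>\<Omega>. a i)"
    and j: "j \<in> I - \<Omega>" "a j \<noteq> {#}"
  shows "U = a j"
proof -
  obtain C where C: "C \<in> zss G" "(\<Sum>i\<in>\<Omega>. a i) = b + C"
    using assms(6) unfolding zss_dvd_def by blast
  define R where "R = C + (\<Sum>i\<in>I - \<Omega> - {j}. a i)"
  have "(\<Sum>i\<in>I. a i) = (\<Sum>i\<in>I - \<Omega>. a i) + (\<Sum>i\<in>\<Omega>. a i)"
    using assms(5,2) by (rule sum.subset_diff)
  also have "(\<Sum>i\<in>I - \<Omega>. a i) = a j + (\<Sum>i\<in>I - \<Omega> - {j}. a i)"
    using assms(2) j(1) by (intro sum.remove) auto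
  finally have "(\<Sum>i\<in>I. a i) = a j + (\<Sum>i\<in>I - \<Omega> - {j}. a i) + (\<Sum>i\<in>\<Omega>. a i)" .
  then have "U = a j + R"
    using sum C(2) unfolding R_def by (simp add: ac_simps)
  moreover have "R \<in> zss G"
    unfolding R_def using C(1) assms(3) by (intro zss_add zss_sum) auto
  ultimately show ?thesis
    using U j assms(3) unfolding zss_atoms_def by auto
qed

lemma sum_nth_atLeast1_atMost:
  "(\<Sum>i\<in>{1..length xs}. f (xs ! (i - 1))) = sum_list (map f xs)"
  by (simp add: sum.atLeast1_atMost_eq sum_list_sum_nth atLeast0LessThan)

lemma (in group) omega_elem_image_inv_ge:
  assumes U: "U \<in> zss_atoms G" and "size U \<noteq> 2"
  shows "enat (size U) \<le> omega_elem G (image_mset (m_inv G) U)"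
proof -
  obtain xs where xs: "mset xs = U" "set xs \<subseteq> carrier G"
    using U by (auto simp: zss_atoms_def zss_iff)
  define n where "n = length xs"
  define pair where "pair x = mset [x, inv x]" for x
  define a where "a i = pair (xs ! (i - 1))" for i
  have a_zss: "a i \<in> zss G" if "i \<in> {1..n}" for i
  proof -
    have "xs ! (i - 1) \<in> carrier G"
      using that xs(2) by (auto simp: n_def)
    then show ?thesis
      unfolding a_def pair_def by (intro mset_in_zssI) auto
  qed
  have "(\<Sum>i\<in>{1..n}. a i) = U + image_mset (m_inv G) U"
  proof -
    have "sum_list (map pair ys) = mset ys + image_mset (m_inv G) (mset ys)" for ys
      by (induction ys) (auto simp: pair_def)
    then show ?thesis
      unfolding a_def n_def sum_nth_atLeast1_atMost xs(1)[symmetric] by simp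
  qed
  moreover have "U \<in> zss G" "U \<noteq> {#}"
    using U by (auto simp: zss_atoms_def)
  ultimately have dvd: "zss_dvd G (image_mset (m_inv G) U) (\<Sum>i\<in>{1..n}. a i)"
    unfolding zss_dvd_def by (auto simp: add.commute)
  have "n = size U"
    using xs(1) by (auto simp: n_def)
  moreover have "size U \<le> card \<Omega>"
    if \<Omega>: "\<Omega> \<subseteq> {1..n}" "zss_dvd G (image_mset (m_inv G) U) (\<Sum>i\<in>\<Omega>. a i)" for \<Omega>
  proof -
    have "\<Omega> = {1..n}"
    proof (rule ccontr)
      assume "\<Omega> \<noteq> {1..n}"
      then obtain j where "j \<in> {1..n} - \<Omega>"
        using \<Omega>(1) by blast
      then have "U = a j"
        using zss_atom_eq_omitted_summand[OF U _ a_zss _ \<Omega>] \<open>(\<Sum>i\<in>{1..n}. a i) = _\<close>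
        by (auto simp: a_def pair_def)
      with \<open>size U \<noteq> 2\<close> show False
        by (simp add: a_def pair_def)
    qed
    with \<open>n = size U\<close> show ?thesis
      by simp
  qed
  ultimately show ?thesis
    using \<open>U \<noteq> {#}\<close> by (intro omega_elem_geI[OF _ a_zss dvd]) (auto simp: Suc_le_eq nonempty_has_size)
qed

text \<open>Each element of \<open>M\<close> needs at most one new summand to be covered.\<close>

lemma subset_mset_sum_cover:
  assumes "finite I" "M \<subseteq># (\<Sum>i\<in>I. a i)"
  shows "\<exists>\<Omega>\<subseteq>I. card \<Omega> \<le> size M \<and> M \<subseteq># (\<Sum>i\<in>\<Omega>. a i)"
  using assms(2)
proof (induction M)
  case empty
  show ?case
    by (intro exI[of _ "{}"]) auto
next
  case (add x M)
  then have "M \<subseteq># (\<Sum>i\<in>I. a i)"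
    by (meson mset_subset_eq_insertD subset_mset.less_imp_le)
  then obtain \<Omega>0 where \<Omega>0: "\<Omega>0 \<subseteq> I" "card \<Omega>0 \<le> size M" "M \<subseteq># (\<Sum>i\<in>\<Omega>0. a i)"
    using add.IH by blast
  have fin: "finite \<Omega>0"
    using \<Omega>0(1) assms(1) by (rule finite_subset)
  show ?case
  proof (cases "add_mset x M \<subseteq># (\<Sum>i\<in>\<Omega>0. a i)")
    case True
    with \<Omega>0 show ?thesis
      by (intro exI[of _ \<Omega>0]) auto
  next
    case False
    have le: "count M y \<le> count (\<Sum>i\<in>\<Omega>0. a i) y" for y
      using \<Omega>0(3) by (rule mset_subset_eq_count)
    have "count (\<Sum>i\<in>\<Omega>0. a i) x = count M x"
    proof -
      obtain y where "count (\<Sum>i\<in>\<Omega>0. a i) y < count (add_mset x M) y"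
        using False by (meson mset_subset_eqI not_le)
      with le[of y] le[of x] show ?thesis
        by (cases "y = x") auto
    qed
    moreover have "count (add_mset x M) x \<le> count (\<Sum>i\<in>I. a i) x"
      using add.prems by (rule mset_subset_eq_count)
    moreover have "(\<Sum>i\<in>I. a i) = (\<Sum>i\<in>I - \<Omega>0. a i) + (\<Sum>i\<in>\<Omega>0. a i)"
      using \<Omega>0(1) assms(1) by (rule sum.subset_diff)
    ultimately have "x \<in># (\<Sum>i\<in>I - \<Omega>0. a i)"
      by (simp add: Suc_le_eq)
    then obtain i where i: "i \<in> I - \<Omega>0" "x \<in># a i"
      using assms(1) by (auto simp: set_mset_sum)
    have "add_mset x M \<subseteq># a i + (\<Sum>j\<in>\<Omega>0. a j)"
    proof (rule mset_subset_eqI)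
      fix y
      show "count (add_mset x M) y \<le> count (a i + (\<Sum>j\<in>\<Omega>0. a j)) y"
        using le[of y] \<open>count (\<Sum>i\<in>\<Omega>0. a i) x = count M x\<close> i(2) by auto
    qed
    with i fin \<Omega>0 show ?thesis
      by (intro exI[of _ "insert i \<Omega>0"]) auto
  qed
qed

lemma (in comm_group) zss_add_cancel:
  assumes "A \<in> zss G" "A + B \<in> zss G"
  shows "B \<in> zss G"
proof -
  obtain xs where xs: "mset xs = A" "set xs \<subseteq> carrier G" "list_prod G xs = \<one>"
    using assms(1) by (auto simp: zss_iff)
  obtain zs where zs: "mset zs = A + B" "set zs \<subseteq> carrier G" "list_prod G zs = \<one>"
    using assms(2) by (auto simp: zss_iff)
  obtain ys where ys: "mset ys = B"
    using ex_mset by blast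
  have ys_carrier: "set ys \<subseteq> carrier G"
    using ys assms(2) zss_carrier by fastforce
  have "\<one> = list_prod G (xs @ ys)"
    using list_prod_mset_eq[OF zs(2), of "xs @ ys"] zs(1,3) xs(1) ys by simp
  also have "\<dots> = list_prod G ys"
    using xs ys_carrier by (simp add: list_prod_append)
  finally show ?thesis
    using mset_in_zssI[OF ys_carrier] ys by simp
qed

lemma (in comm_group) omega_elem_le_size:
  assumes V: "V \<in> zss G"
  shows "omega_elem G V \<le> enat (size V)"
proof (rule omega_elem_leI)
  fix n :: nat and a
  assume a: "\<And>i. i \<in> {1..n} \<Longrightarrow> a i \<in> zss G" and "zss_dvd G V (\<Sum>i\<in>{1..n}. a i)"
  then have "V \<subseteq># (\<Sum>i\<in>{1..n}. a i)"
    unfolding zss_dvd_def by auto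
  then obtain \<Omega> where \<Omega>: "\<Omega> \<subseteq> {1..n}" "card \<Omega> \<le> size V" "V \<subseteq># (\<Sum>i\<in>\<Omega>. a i)"
    using subset_mset_sum_cover by blast
  define D where "D = (\<Sum>i\<in>\<Omega>. a i) - V"
  have sum_eq: "(\<Sum>i\<in>\<Omega>. a i) = V + D"
    using \<Omega>(3) by (simp add: D_def subset_mset.add_diff_inverse)
  have "(\<Sum>i\<in>\<Omega>. a i) \<in> zss G"
    using \<Omega>(1) a by (intro zss_sum) blast
  then have "D \<in> zss G"
    using zss_add_cancel[OF V] sum_eq by simp
  with \<Omega> sum_eq show "\<exists>\<Omega>\<subseteq>{1..n}. card \<Omega> \<le> size V \<and> zss_dvd G V (\<Sum>i\<in>\<Omega>. a i)"
    unfolding zss_dvd_def by blast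
qed

theorem lemma5p8:
  fixes G :: "('a, 'b) monoid_scheme"
  assumes "group G" and "finite (carrier G)" and "card (carrier G) \<ge> 3"
  shows "enat (davenport G) \<le> omega_grp G \<and>
         (comm_group G \<longrightarrow> enat (davenport G) = omega_grp G)"
proof -
  interpret group G by fact
  obtain U3 where U3: "U3 \<in> zss_atoms G" "size U3 = 3"
    using ex_zss_atom_size_3 assms(3) by blast
  then obtain U where U: "U \<in> zss_atoms G" "size U = davenport G"
    using ex_zss_atom_size_davenport assms(2) by blast
  have "3 \<le> davenport G"
    using size_zss_atom_le_davenport[OF assms(2) U3(1)] U3(2) by simp
  then have "enat (davenport G) \<le> omega_elem G (image_mset (m_inv G) U)"
    using omega_elem_image_inv_ge[OF U(1)] U(2) by simp
  also have "\<dots> \<le> omega_grp G"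
    unfolding omega_grp_def using zss_atoms_image_inv[OF U(1)] by (rule SUP_upper)
  finally have "enat (davenport G) \<le> omega_grp G" .
  moreover have "omega_grp G \<le> enat (davenport G)" if "comm_group G"
  proof -
    interpret comm_group G by fact
    show ?thesis
      unfolding omega_grp_def
    proof (rule SUP_least)
      fix V assume "V \<in> zss_atoms G"
      then have "omega_elem G V \<le> enat (size V)"
        by (intro omega_elem_le_size) (simp add: zss_atoms_def)
      also have "\<dots> \<le> enat (davenport G)"
        using size_zss_atom_le_davenport[OF assms(2) \<open>V \<in> zss_atoms G\<close>] by simp
      finally show "omega_elem G V \<le> enat (davenport G)" .
    qed
  qed
  ultimately show ?thesis
    by auto
qed

end
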